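(* Let $a,b$ be nonzero complex numbers with $a\ne b$ and $a+b\neq0$, and let $n$ be a positive integer. Define $$f(a,b)=\lim_{x\to \frac{2ab}{a+b}}\frac{d^n}{dx^n}\,\frac{(x-a)^n(x-b)^n}{x^{n+1}}.$$ Then $f(a,b)=0$ if $n$ is odd, and if $n$ is even $$f(a,b)=(-1)^{n/2}(a-b)^n\left(\frac{a+b}{2ab}\right)^{n+1}\prod_{i=1}^{n/2}(2i-1)^2.$$ *)

theory Defs
  imports "HOL-Analysis.Analysis"
begin

end

theory Submission
  imports Defs "HOL-Computational_Algebra.Polynomial"
begin

(* With p(y) = ((1 - a y)(1 - b y))^n the function equals x^(n-1) p(1/x) for x ~= 0, and
   differentiating its Laurent expansion termwise gives the classical identity
   (x^(n-1) p(1/x))^(n) = (-1)^n x^(-n-1) p^(n)(1/x).  The limit point 2ab/(a+b) is the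
   reciprocal of the midpoint y0 = (a+b)/(2ab) of the roots 1/a, 1/b of p, and
   p(y) = (ab)^n ((y - y0)^2 - w^2)^n with w = (a-b)/(2ab).  Hence p^(n)(y0) is n! times the
   coefficient of (y - y0)^n: zero for odd n, and (ab)^n (2m)! C(2m,m) (-w^2)^m for n = 2m,
   where (2m)! C(2m,m) = 4^m ((2m-1)!!)^2. *)

lemma higher_deriv_eqI:
  fixes F :: "'a::real_normed_field \<Rightarrow> 'a" and R :: "nat \<Rightarrow> 'a \<Rightarrow> 'a"
  assumes "open S" and "x \<in> S"
    and F: "\<And>x. x \<in> S \<Longrightarrow> F x = R 0 x"
    and R: "\<And>j x. x \<in> S \<Longrightarrow> (R j has_field_derivative R (Suc j) x) (at x)"
  shows "(deriv ^^ j) F x = R j x"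
  using \<open>x \<in> S\<close>
proof (induction j arbitrary: x)
  case 0
  then show ?case by (simp add: F)
next
  case (Suc j)
  have "((deriv ^^ j) F has_field_derivative R (Suc j) x) (at x)"
    using R[OF Suc.prems] \<open>open S\<close> Suc.prems
    by (rule has_field_derivative_transform_within_open) (simp add: Suc.IH)
  then show ?case by (simp add: DERIV_imp_deriv)
qed

lemma higher_deriv_power_int_sum:
  fixes c :: "'b \<Rightarrow> 'a::real_normed_field" and e :: "'b \<Rightarrow> int"
  assumes "x \<noteq> 0"
  shows "(deriv ^^ j) (\<lambda>x. \<Sum>k\<in>K. c k * power_int x (e k)) x =
    (\<Sum>k\<in>K. c k * (\<Prod>i<j. of_int (e k - int i)) * power_int x (e k - int j))"
proof (rule higher_deriv_eqI[of "- {0}"])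
  fix j and x :: 'a assume "x \<in> - {0}"
  then show "((\<lambda>x. \<Sum>k\<in>K. c k * (\<Prod>i<j. of_int (e k - int i)) * power_int x (e k - int j))
      has_field_derivative
      (\<Sum>k\<in>K. c k * (\<Prod>i<Suc j. of_int (e k - int i)) * power_int x (e k - int (Suc j)))) (at x)"
    by (auto intro!: derivative_eq_intros sum.cong simp: algebra_simps)
qed (use assms in auto)

(* For j > m k the product vanishes, so the truncated exponent m k - j is harmless. *)
lemma higher_deriv_power_sum:
  fixes c :: "'b \<Rightarrow> 'a::real_normed_field" and m :: "'b \<Rightarrow> nat"
  shows "(deriv ^^ j) (\<lambda>y. \<Sum>k\<in>K. c k * (y - z) ^ m k) y =
    (\<Sum>k\<in>K. c k * (\<Prod>i<j. of_nat (m k) - of_nat i) * (y - z) ^ (m k - j))"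
proof (rule higher_deriv_eqI[of UNIV])
  fix j and y :: 'a
  have "c k * (\<Prod>i<j. of_nat (m k) - of_nat i) * (of_nat (m k - j) * (y - z) ^ (m k - j - 1)) =
        c k * (\<Prod>i<Suc j. of_nat (m k) - of_nat i) * (y - z) ^ (m k - Suc j)" for k
  proof (cases "j < m k")
    case False
    then have "(\<Prod>i<Suc j. of_nat (m k) - of_nat i :: 'a) = 0"
      by (intro prod_zero bexI[of _ "m k"]) auto
    with False show ?thesis by simp
  qed (simp add: algebra_simps)
  then show "((\<lambda>y. \<Sum>k\<in>K. c k * (\<Prod>i<j. of_nat (m k) - of_nat i) * (y - z) ^ (m k - j))
      has_field_derivative
      (\<Sum>k\<in>K. c k * (\<Prod>i<Suc j. of_nat (m k) - of_nat i) * (y - z) ^ (m k - Suc j))) (at y)"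
    by (auto intro!: derivative_eq_intros sum.cong)
qed auto

lemma higher_deriv_power_sum_at_center:
  fixes c :: "'b \<Rightarrow> 'a::real_normed_field" and m :: "'b \<Rightarrow> nat"
  assumes "finite K"
  shows "(deriv ^^ n) (\<lambda>y. \<Sum>k\<in>K. c k * (y - z) ^ m k) z =
    fact n * (\<Sum>k | k \<in> K \<and> m k = n. c k)"
proof -
  have "c k * (\<Prod>i<n. of_nat (m k) - of_nat i) * (z - z) ^ (m k - n) =
        fact n * (if m k = n then c k else 0)" for k
  proof -
    consider "m k < n" | "m k = n" | "m k > n" by linarith
    then show ?thesis
    proof cases
      case 1
      then have "(\<Prod>i<n. of_nat (m k) - of_nat i :: 'a) = 0"
        by (intro prod_zero bexI[of _ "m k"]) auto
      with 1 show ?thesis by simp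
    next
      case 2
      have "(\<Prod>i<n. of_nat n - of_nat i :: 'a) = fact n"
        by (simp add: fact_prod_rev atLeast0LessThan)
      with 2 show ?thesis by simp
    qed simp
  qed
  then have "(deriv ^^ n) (\<lambda>y. \<Sum>k\<in>K. c k * (y - z) ^ m k) z =
      (\<Sum>k\<in>K. fact n * (if m k = n then c k else 0))"
    by (simp only: higher_deriv_power_sum)
  with assms show ?thesis
    by (simp add: sum.inter_filter sum_distrib_left)
qed

lemma higher_deriv_quadratic_power_at_center:
  fixes c q z :: "'a::real_normed_field"
  shows "(deriv ^^ n) (\<lambda>y. c * ((y - z)\<^sup>2 + q) ^ n) z =
    (if even n then c * fact n * of_nat (n choose (n div 2)) * q ^ (n div 2) else 0)"
proof -
  have expand: "(\<lambda>y. c * ((y - z)\<^sup>2 + q) ^ n) =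
      (\<lambda>y. \<Sum>j\<le>n. c * of_nat (n choose j) * q ^ (n - j) * (y - z) ^ (2 * j))"
    unfolding binomial_ring by (simp add: sum_distrib_left mult_ac flip: power_mult)
  have "{j. j \<in> {..n} \<and> 2 * j = n} = (if even n then {n div 2} else {})"
    by auto
  then show ?thesis
    unfolding expand higher_deriv_power_sum_at_center[OF finite_atMost]
    by (auto simp: mult_ac elim!: evenE)
qed

lemma higher_deriv_poly: "(deriv ^^ n) (poly p) = poly ((pderiv ^^ n) p)"
  by (induction n) (simp_all add: DERIV_imp_deriv[OF poly_DERIV])

lemma prod_falling_reflect:
  "(\<Prod>i<n. of_int (int n - 1 - int k - int i) :: 'a::comm_ring_1) =
    (-1) ^ n * (\<Prod>i<n. of_nat k - of_nat i)"
proof -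
  have "(\<Prod>i<n. of_int (int n - 1 - int k - int i) :: 'a) =
        (\<Prod>i<n. of_int (int n - 1 - int k - int (n - Suc i)))"
    by (rule prod.nat_diff_reindex[symmetric])
  also have "\<dots> = (\<Prod>i<n. (-1) * (of_nat k - of_nat i))"
    by (rule prod.cong) auto
  also have "\<dots> = (-1) ^ n * (\<Prod>i<n. of_nat k - of_nat i)"
    unfolding prod.distrib by simp
  finally show ?thesis .
qed

lemma higher_deriv_reciprocal_poly:
  fixes p :: "'a::real_normed_field poly"
  assumes "x \<noteq> 0" and "n > 0"
  shows "(deriv ^^ n) (\<lambda>x. x ^ (n - 1) * poly p (inverse x)) x =
    (-1) ^ n * inverse x ^ (n + 1) * poly ((pderiv ^^ n) p) (inverse x)"
proof -
  have "eventually (\<lambda>x. x \<noteq> 0) (nhds x)"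
    using assms(1) by (rule t1_space_nhds)
  then have "eventually (\<lambda>x. x ^ (n - 1) * poly p (inverse x) =
      (\<Sum>k\<le>degree p. coeff p k * power_int x (int n - 1 - int k))) (nhds x)"
  proof eventually_elim
    case (elim x)
    have pow: "x ^ (n - 1) * inverse x ^ k = power_int x (int n - 1 - int k)" for k
    proof -
      have "int n - 1 - int k = int (n - 1) + - int k"
        using assms(2) by simp
      then show ?thesis
        by (simp only: power_int_add[OF disjI1[OF elim]] power_int_minus power_int_of_nat
            power_inverse)
    qed
    show ?case
      by (simp add: poly_altdef sum_distrib_left mult.left_commute flip: pow)
  qed
  then have "(deriv ^^ n) (\<lambda>x. x ^ (n - 1) * poly p (inverse x)) x =
      (deriv ^^ n) (\<lambda>x. \<Sum>k\<le>degree p. coeff p k * power_int x (int n - 1 - int k)) x"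
    by (rule higher_deriv_cong_ev) simp
  also have "\<dots> = (\<Sum>k\<le>degree p. coeff p k * (\<Prod>i<n. of_int (int n - 1 - int k - int i)) *
      power_int x (int n - 1 - int k - int n))"
    by (rule higher_deriv_power_int_sum[OF assms(1)])
  also have "\<dots> = (-1) ^ n * inverse x ^ (n + 1) *
      (\<Sum>k\<le>degree p. coeff p k * (\<Prod>i<n. of_nat k - of_nat i) * (inverse x - 0) ^ (k - n))"
    unfolding sum_distrib_left
  proof (rule sum.cong[OF refl])
    fix k
    have reflect: "(\<Prod>i<n. of_int (int n - 1 - int k - int i)) =
        (-1) ^ n * (\<Prod>i<n. of_nat k - of_nat i :: 'a)"
      by (rule prod_falling_reflect)
    show "coeff p k * (\<Prod>i<n. of_int (int n - 1 - int k - int i)) *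
        power_int x (int n - 1 - int k - int n) =
        (-1) ^ n * inverse x ^ (n + 1) *
        (coeff p k * (\<Prod>i<n. of_nat k - of_nat i) * (inverse x - 0) ^ (k - n))"
    proof (cases "k < n")
      case True
      then have "(\<Prod>i<n. of_nat k - of_nat i :: 'a) = 0"
        by (intro prod_zero bexI[of _ k]) auto
      then show ?thesis
        by (simp only: reflect mult_zero_left mult_zero_right)
    next
      case False
      have "int n - 1 - int k - int n = - int (k + 1)"
        by simp
      then have "power_int x (int n - 1 - int k - int n) = inverse x ^ (k + 1)"
        by (simp only: power_int_minus power_int_of_nat power_inverse)
      also have "k + 1 = (n + 1) + (k - n)"
        using False by simp
      finally have "power_int x (int n - 1 - int k - int n) = inverse x ^ (n + 1) * inverse x ^ (k - n)"
        by (simp only: power_add)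
      then show ?thesis
        by (simp only: reflect) (simp add: mult_ac)
    qed
  qed
  also have "(\<Sum>k\<le>degree p. coeff p k * (\<Prod>i<n. of_nat k - of_nat i) * (inverse x - 0) ^ (k - n)) =
      poly ((pderiv ^^ n) p) (inverse x)"
  proof -
    have "poly ((pderiv ^^ n) p) (inverse x) = (deriv ^^ n) (poly p) (inverse x)"
      by (simp add: higher_deriv_poly)
    also have "poly p = (\<lambda>y. \<Sum>k\<le>degree p. coeff p k * (y - 0) ^ k)"
      by (simp add: poly_altdef fun_eq_iff)
    also have "(deriv ^^ n) \<dots> (inverse x) =
        (\<Sum>k\<le>degree p. coeff p k * (\<Prod>i<n. of_nat k - of_nat i) * (inverse x - 0) ^ (k - n))"
      by (rule higher_deriv_power_sum)
    finally show ?thesis ..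
  qed
  finally show ?thesis .
qed

lemma fact_double: "fact (2 * m) = (2::nat) ^ m * fact m * (\<Prod>i=1..m. 2 * i - 1)"
proof (induction m)
  case (Suc m)
  have "fact (2 * Suc m) = (2 * m + 2) * (2 * m + 1) * (fact (2 * m) :: nat)"
    by (simp add: algebra_simps)
  with Suc show ?case
    by (simp add: prod.cl_ivl_Suc algebra_simps)
qed simp

lemma fact_mult_central_binomial:
  "fact (2 * m) * (2 * m choose m) = (4::nat) ^ m * (\<Prod>i=1..m. 2 * i - 1) ^ 2"
proof -
  have "fact m * fact m * (fact (2 * m) * (2 * m choose m)) = (fact (2 * m) :: nat) ^ 2"
    using binomial_fact_lemma[of m "2 * m"] by (simp add: power2_eq_square mult_ac)
  also have "\<dots> = fact m * fact m * (4 ^ m * (\<Prod>i=1..m. 2 * i - 1) ^ 2)"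
  proof -
    have "(4::nat) ^ m = 2 ^ m * 2 ^ m"
      by (simp flip: power_mult_distrib)
    then show ?thesis
      by (simp only: fact_double) (simp add: power2_eq_square mult_ac)
  qed
  finally show ?thesis
    by simp
qed

lemma higher_deriv_difference_of_squares_power_at_center:
  fixes c w z :: "'a::real_normed_field"
  shows "(deriv ^^ n) (\<lambda>y. c * ((y - z)\<^sup>2 - w\<^sup>2) ^ n) z =
    (if odd n then 0
     else (-1) ^ (n div 2) * c * (2 * w) ^ n * (\<Prod>i=1..n div 2. 2 * of_nat i - 1) ^ 2)"
proof (cases "even n")
  case True
  then obtain m where n: "n = 2 * m"
    by blast
  define P :: 'a where "P = (\<Prod>i=1..m. 2 * of_nat i - 1)"
  have fact_binomial: "fact n * of_nat (n choose m) = 4 ^ m * P\<^sup>2"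
  proof -
    have "of_nat (fact n * (n choose m)) = (of_nat (4 ^ m * (\<Prod>i=1..m. 2 * i - 1) ^ 2) :: 'a)"
      unfolding n fact_mult_central_binomial ..
    then show ?thesis
      by (simp add: P_def of_nat_prod of_nat_diff)
  qed
  have neg_square: "(- w\<^sup>2) ^ m = (-1) ^ m * w ^ n"
    unfolding n power_mult by (rule power_minus)
  have double: "(2 * w) ^ n = 4 ^ m * w ^ n"
    unfolding n power_mult_distrib power_mult by simp
  have "(deriv ^^ n) (\<lambda>y. c * ((y - z)\<^sup>2 - w\<^sup>2) ^ n) z =
      c * (fact n * of_nat (n choose m)) * (- w\<^sup>2) ^ m"
    using higher_deriv_quadratic_power_at_center[of n c z "- w\<^sup>2"] True n
    by (simp add: mult.assoc)
  also have "\<dots> = (-1) ^ m * c * (2 * w) ^ n * P\<^sup>2"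
    unfolding fact_binomial neg_square double by (simp only: mult_ac)
  finally show ?thesis
    using True n by (simp add: P_def)
qed (use higher_deriv_quadratic_power_at_center[of n c z "- w\<^sup>2"] in simp)

lemma higher_deriv_two_roots_quotient:
  fixes a b x :: "'a::real_normed_field"
  assumes "x \<noteq> 0" and "n > 0"
  shows "(deriv ^^ n) (\<lambda>x. (x - a) ^ n * (x - b) ^ n / x ^ (n + 1)) x =
    (-1) ^ n * inverse x ^ (n + 1) *
      poly ((pderiv ^^ n) (([:1, -a:] * [:1, -b:]) ^ n)) (inverse x)"
proof -
  have "eventually (\<lambda>x. x \<noteq> 0) (nhds x)"
    using assms(1) by (rule t1_space_nhds)
  then have "eventually (\<lambda>x. (x - a) ^ n * (x - b) ^ n / x ^ (n + 1) =
      x ^ (n - 1) * poly (([:1, -a:] * [:1, -b:]) ^ n) (inverse x)) (nhds x)"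
  proof eventually_elim
    case (elim x)
    define Q where "Q = (1 - a * inverse x) * (1 - b * inverse x)"
    have "(x - a) ^ n * (x - b) ^ n / x ^ (n + 1) = ((x - a) * (x - b)) ^ n / x ^ (n + 1)"
      by (simp add: power_mult_distrib)
    also have "(x - a) * (x - b) = x\<^sup>2 * Q"
      using elim by (simp add: Q_def field_simps power2_eq_square)
    also have "(x\<^sup>2 * Q) ^ n = x ^ (n - 1) * x ^ (n + 1) * Q ^ n"
    proof -
      have "2 * n = (n - 1) + (n + 1)"
        using assms(2) by simp
      then show ?thesis
        by (simp only: power_mult_distrib power_mult[symmetric] power_add[symmetric])
    qed
    also have "Q ^ n = poly (([:1, -a:] * [:1, -b:]) ^ n) (inverse x)"
      by (simp add: Q_def algebra_simps)
    finally show ?case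
      using elim by simp
  qed
  then have "(deriv ^^ n) (\<lambda>x. (x - a) ^ n * (x - b) ^ n / x ^ (n + 1)) x =
      (deriv ^^ n) (\<lambda>x. x ^ (n - 1) * poly (([:1, -a:] * [:1, -b:]) ^ n) (inverse x)) x"
    by (rule higher_deriv_cong_ev) simp
  also have "\<dots> = (-1) ^ n * inverse x ^ (n + 1) *
      poly ((pderiv ^^ n) (([:1, -a:] * [:1, -b:]) ^ n)) (inverse x)"
    by (rule higher_deriv_reciprocal_poly[OF assms])
  finally show ?thesis .
qed

lemma poly_higher_pderiv_at_midpoint_of_roots:
  fixes a b :: "'a::real_normed_field"
  assumes "a \<noteq> 0" and "b \<noteq> 0"
  shows "poly ((pderiv ^^ n) (([:1, -a:] * [:1, -b:]) ^ n)) ((a + b) / (2 * a * b)) =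
    (if odd n then 0
     else (-1) ^ (n div 2) * (a - b) ^ n * (\<Prod>i=1..n div 2. 2 * of_nat i - 1) ^ 2)"
proof -
  define y0 where "y0 = (a + b) / (2 * a * b)"
  define w where "w = (a - b) / (2 * a * b)"
  have "poly (([:1, -a:] * [:1, -b:]) ^ n) = (\<lambda>y. (a * b) ^ n * ((y - y0)\<^sup>2 - w\<^sup>2) ^ n)"
  proof
    fix y
    have "poly (([:1, -a:] * [:1, -b:]) ^ n) y = ((1 - a * y) * (1 - b * y)) ^ n"
      by (simp add: algebra_simps)
    also have "(1 - a * y) * (1 - b * y) = a * b * ((y - y0)\<^sup>2 - w\<^sup>2)"
      using assms by (simp add: y0_def w_def field_simps power2_eq_square)
    finally show "poly (([:1, -a:] * [:1, -b:]) ^ n) y =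
        (a * b) ^ n * ((y - y0)\<^sup>2 - w\<^sup>2) ^ n"
      by (simp only: power_mult_distrib)
  qed
  then have "poly ((pderiv ^^ n) (([:1, -a:] * [:1, -b:]) ^ n)) y0 =
      (deriv ^^ n) (\<lambda>y. (a * b) ^ n * ((y - y0)\<^sup>2 - w\<^sup>2) ^ n) y0"
    by (simp flip: higher_deriv_poly)
  moreover have "(a * b) ^ n * (2 * w) ^ n = (a - b) ^ n"
    using assms by (simp add: w_def field_simps flip: power_mult_distrib)
  ultimately show ?thesis
    by (simp add: y0_def higher_deriv_difference_of_squares_power_at_center mult_ac)
qed

theorem lemma9:
  fixes a b :: complex and n :: nat
  assumes "a \<noteq> 0" and "b \<noteq> 0" and "a \<noteq> b" and "a + b \<noteq> 0" and "n > 0"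
  shows "(((deriv ^^ n) (\<lambda>x. (x - a) ^ n * (x - b) ^ n / x ^ (n + 1))) \<longlongrightarrow>
            (if odd n then 0
             else (-1) ^ (n div 2) * (a - b) ^ n * ((a + b) / (2 * a * b)) ^ (n + 1) *
                  (\<Prod>i\<in>{1..n div 2}. (2 * of_nat i - 1) ^ 2)))
           (at (2 * a * b / (a + b)))"
proof -
  define c where "c = 2 * a * b / (a + b)"
  define G where "G x = (-1) ^ n * inverse x ^ (n + 1) *
    poly ((pderiv ^^ n) (([:1, -a:] * [:1, -b:]) ^ n)) (inverse x)" for x
  have "c \<noteq> 0" and inverse_c: "inverse c = (a + b) / (2 * a * b)"
    using assms by (simp_all add: c_def)
  have "eventually (\<lambda>x. x \<noteq> 0) (at c)"
    using \<open>c \<noteq> 0\<close> t1_space_nhds unfolding eventually_at_filter by (blast intro: eventually_mono)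
  then have derivs:
    "eventually (\<lambda>x. G x = (deriv ^^ n) (\<lambda>x. (x - a) ^ n * (x - b) ^ n / x ^ (n + 1)) x) (at c)"
  proof eventually_elim
    case (elim x)
    show ?case
      unfolding G_def by (rule higher_deriv_two_roots_quotient[OF elim assms(5), symmetric])
  qed
  have "continuous (at c) G"
    unfolding G_def using \<open>c \<noteq> 0\<close> by (intro continuous_intros) simp_all
  then have "(G \<longlongrightarrow> G c) (at c)"
    by (simp add: continuous_at)
  then have "((deriv ^^ n) (\<lambda>x. (x - a) ^ n * (x - b) ^ n / x ^ (n + 1)) \<longlongrightarrow> G c) (at c)"
    using derivs by (rule Lim_transform_eventually)
  moreover have "G c = (if odd n then 0
      else (-1) ^ (n div 2) * (a - b) ^ n * ((a + b) / (2 * a * b)) ^ (n + 1) *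
           (\<Prod>i\<in>{1..n div 2}. (2 * of_nat i - 1) ^ 2))"
    unfolding G_def inverse_c poly_higher_pderiv_at_midpoint_of_roots[OF assms(1,2)]
    by (simp add: prod_power_distrib mult_ac)
  ultimately show ?thesis
    by (simp only: c_def)
qed

end
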